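(* Let $r>0$, $0<p<1$, $q=1-p$, and let $X\sim\mathcal{UNB}(r,p)$ with probability mass function $$p(x)=\frac{q^{x}p^{r}}{1+x}\binom{r+x-1}{x}\,{}_2F_1(1,r+x;2+x;q),\qquad x=0,1,2,\dots.$$ Then for every $x=0,1,2,\dots$, $$p(x+1)=p(x)-\frac{p^{r}q^{x}}{x+1}\binom{r+x-1}{r-1},$$ and consequently $p(x+1)<p(x)$ for all $x\ge 0$, i.e. the distribution is strictly decreasing with mode at $0$.
   Context: For real $r>0$ and integer $x\ge0$, $\binom{r+x-1}{x}=\binom{r+x-1}{r-1}=\frac{\Gamma(r+x)}{x!\,\Gamma(r)}$. ${}_2F_1(a,b;c;z)=\sum_{n\ge0}\frac{(a)_n(b)_n}{(c)_n}\frac{z^n}{n!}$ with $(s)_n=s(s+1)\cdots(s+n-1)$, $(s)_0=1$. $\mathcal{UNB}(r,p)$ is the law of $X$ where $N$ is negative binomial with $P(N=n)=\binom{r+n-1}{n}p^rq^n$ and $X\mid N=n$ is uniform on $\{0,\dots,n\}$. *)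

theory Defs
  imports "HOL-Analysis.Analysis"
begin

text \<open>Generalized binomial coefficient for real r > 0 and integer x \<ge> 0:
  binom(r+x-1, x) = binom(r+x-1, r-1) = Gamma(r+x) / (x! Gamma(r)).\<close>
definition nb_binom :: "real \<Rightarrow> nat \<Rightarrow> real" where
  "nb_binom r x = Gamma (r + real x) / (fact x * Gamma r)"

definition hyp2F1 :: "real \<Rightarrow> real \<Rightarrow> real \<Rightarrow> real \<Rightarrow> real" where
  "hyp2F1 a b c z = (\<Sum>n. pochhammer a n * pochhammer b n / pochhammer c n * z ^ n / fact n)"

definition unb_pmf :: "real \<Rightarrow> real \<Rightarrow> nat \<Rightarrow> real" where
  "unb_pmf r p x = (let q = 1 - p in
     q ^ x * p powr r / (1 + real x) * nb_binom r x
       * hyp2F1 1 (r + real x) (2 + real x) q)"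

end

theory Submission
  imports Defs
begin

text \<open>With w(k) = q^k binom(r+k-1, k) / (k+1), the n-th term of the hypergeometric series in
  p(x), multiplied by its prefactor, is exactly w(x+n): the term ratios of both sequences are
  q (r+x+n) / (x+n+2). Hence p(x) = p^r (w(x) + w(x+1) + ...), which is the identity
  P(X = x) = sum over k >= x of P(N = k) / (k+1), and consecutive tails differ by the single
  positive term p^r w(x).\<close>

lemma nb_binom_pos: "r > 0 \<Longrightarrow> nb_binom r k > 0"
  unfolding nb_binom_def by (simp add: add_pos_nonneg)

lemma nb_binom_Suc:
  assumes "r > 0"
  shows "nb_binom r (Suc k) = nb_binom r k * ((r + real k) / (real k + 1))"
proof -
  have "r + real k \<notin> \<int>\<^sub>\<le>\<^sub>0"
    using assms by (metis add_pos_nonneg nonpos_Ints_cases of_int_le_0_iff of_nat_0_le_iff not_le)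
  then have "Gamma (r + real k + 1) = (r + real k) * Gamma (r + real k)"
    by (rule Gamma_plus1)
  moreover have "Gamma r > 0"
    using assms by simp
  ultimately show ?thesis
    unfolding nb_binom_def by (simp add: field_simps add.assoc)
qed

definition hyp2F1_term :: "real \<Rightarrow> real \<Rightarrow> real \<Rightarrow> real \<Rightarrow> nat \<Rightarrow> real" where
  "hyp2F1_term a b c z n = pochhammer a n * pochhammer b n / pochhammer c n * z ^ n / fact n"

lemma hyp2F1_eq_suminf: "hyp2F1 a b c z = (\<Sum>n. hyp2F1_term a b c z n)"
  unfolding hyp2F1_def hyp2F1_term_def ..

lemma hyp2F1_term_Suc:
  assumes "c > 0"
  shows "hyp2F1_term a b c z (Suc n)
    = hyp2F1_term a b c z n * ((a + real n) / (real n + 1) * ((b + real n) / (c + real n)) * z)"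
proof -
  have "pochhammer c n > 0" "c + real n > 0"
    using assms by (simp_all add: pochhammer_pos add_pos_nonneg)
  then show ?thesis
    unfolding hyp2F1_term_def pochhammer_Suc by (simp add: field_simps)
qed

definition unb_weight :: "real \<Rightarrow> real \<Rightarrow> nat \<Rightarrow> real" where
  "unb_weight r q k = q ^ k * nb_binom r k / (real k + 1)"

lemma unb_weight_pos: "r > 0 \<Longrightarrow> q > 0 \<Longrightarrow> unb_weight r q k > 0"
  unfolding unb_weight_def using nb_binom_pos by simp

lemma unb_weight_Suc:
  assumes "r > 0"
  shows "unb_weight r q (Suc k) = unb_weight r q k * (q * (r + real k) / (real k + 2))"
  unfolding unb_weight_def nb_binom_Suc[OF assms] by (simp add: field_simps)

lemma summable_unb_weight:
  assumes "r > 0" "0 < q" "q < 1"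
  shows "summable (unb_weight r q)"
proof (rule summable_ratio_test[where c = "(1 + q) / 2" and N = "nat \<lceil>2 * q * r / (1 - q)\<rceil>"])
  show "(1 + q) / 2 < 1"
    using assms by simp
  fix k assume "nat \<lceil>2 * q * r / (1 - q)\<rceil> \<le> k"
  then have "2 * q * r / (1 - q) \<le> real k"
    by linarith
  then have "q * (r + real k) / (real k + 2) \<le> (1 + q) / 2"
    using assms by (simp add: field_simps)
  then have "unb_weight r q (Suc k) \<le> unb_weight r q k * ((1 + q) / 2)"
    unfolding unb_weight_Suc[OF assms(1)] using unb_weight_pos[OF assms(1,2), of k]
    by (intro mult_left_mono) auto
  then show "norm (unb_weight r q (Suc k)) \<le> (1 + q) / 2 * norm (unb_weight r q k)"
    using unb_weight_pos[OF assms(1,2)] by (simp add: abs_of_pos mult.commute)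
qed

lemma summable_unb_weight_tail:
  assumes "r > 0" "0 < q" "q < 1"
  shows "summable (\<lambda>n. unb_weight r q (x + n))"
  using summable_ignore_initial_segment[OF summable_unb_weight[OF assms], of x]
  by (simp add: add.commute)

lemma unb_weight_eq_hyp2F1_term:
  assumes "r > 0"
  shows "q ^ x / (1 + real x) * nb_binom r x * hyp2F1_term 1 (r + real x) (2 + real x) q n
    = unb_weight r q (x + n)"
proof (induction n)
  case 0
  show ?case
    by (simp add: unb_weight_def hyp2F1_term_def)
next
  case (Suc n)
  have ratio: "(1 + real n) / (real n + 1) * ((r + real x + real n) / (2 + real x + real n)) * q
      = q * (r + real (x + n)) / (real (x + n) + 2)"
  proof -
    have "(1 + real n) / (real n + 1) = 1"
      by simp
    then show ?thesis
      by (simp add: algebra_simps)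
  qed
  have "q ^ x / (1 + real x) * nb_binom r x * hyp2F1_term 1 (r + real x) (2 + real x) q (Suc n)
      = q ^ x / (1 + real x) * nb_binom r x * hyp2F1_term 1 (r + real x) (2 + real x) q n
        * ((1 + real n) / (real n + 1) * ((r + real x + real n) / (2 + real x + real n)) * q)"
    by (simp add: hyp2F1_term_Suc add.assoc)
  also have "\<dots> = unb_weight r q (x + Suc n)"
    unfolding Suc.IH ratio add_Suc_right unb_weight_Suc[OF assms] ..
  finally show ?case .
qed

lemma unb_pmf_eq_tail_sum:
  assumes "r > 0" "0 < p" "p < 1"
  shows "unb_pmf r p x = p powr r * (\<Sum>n. unb_weight r (1 - p) (x + n))"
proof -
  define c where "c = (1 - p) ^ x / (1 + real x) * nb_binom r x"
  define t where "t = hyp2F1_term 1 (r + real x) (2 + real x) (1 - p)"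
  have c_pos: "c > 0"
    unfolding c_def using assms nb_binom_pos by simp
  have weight_eq: "(\<lambda>n. c * t n) = (\<lambda>n. unb_weight r (1 - p) (x + n))"
    unfolding c_def t_def using unb_weight_eq_hyp2F1_term[OF assms(1)] by simp
  have "summable t"
    using summable_unb_weight_tail[of r "1 - p" x] assms c_pos summable_cmult_iff[of c t] weight_eq
    by simp
  have "unb_pmf r p x = p powr r * (c * suminf t)"
    unfolding unb_pmf_def Let_def c_def t_def hyp2F1_eq_suminf by (simp add: mult_ac)
  also have "c * suminf t = (\<Sum>n. c * t n)"
    using suminf_mult[OF \<open>summable t\<close>] by simp
  finally show ?thesis
    unfolding weight_eq .
qed

theorem mainTheorem2:
  fixes r p :: real
  assumes "r > 0" and "0 < p" and "p < 1"
  shows "(\<forall>x::nat. unb_pmf r p (Suc x) =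
            unb_pmf r p x - p powr r * (1 - p) ^ x / (real x + 1) * nb_binom r x)
       \<and> (\<forall>x::nat. unb_pmf r p (Suc x) < unb_pmf r p x)"
proof -
  have step: "unb_pmf r p (Suc x) = unb_pmf r p x - p powr r * unb_weight r (1 - p) x" for x
  proof -
    have "summable (\<lambda>n. unb_weight r (1 - p) (x + n))"
      using summable_unb_weight_tail assms by simp
    from suminf_split_head[OF this] show ?thesis
      unfolding unb_pmf_eq_tail_sum[OF assms] by (simp add: right_diff_distrib)
  qed
  moreover have "p powr r * unb_weight r (1 - p) x > 0" for x
    using assms unb_weight_pos by simp
  ultimately show ?thesis
    by (simp add: unb_weight_def)
qed

end
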